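(* Consider smoothed LocalMaxCut on a graph $G=(V,E)$ with $n=|V|$, $m=|E|$ and maximum degree $\Delta(G)$, where the edge weights $w_e$ are drawn independently from distributions with densities $f_e:[-1,1]\to[0,\phi]$. Then the expected maximum number of iterations of local search under the Flip neighbourhood (over all initial cuts and all improving sequences) is $O(2^{\Delta(G)}nm^2\phi)$.
   Context: LocalMaxCut: given a weighted undirected graph $G=(V,E)$ with weights $w_e$, a cut is a partition $(V_1,V_2)$ of $V$ with weight $\sum_{uv\in E,\,u\in V_1,\,v\in V_2}w_{uv}$; the Flip neighbours of a cut are the cuts obtained by moving a single vertex to the other block; a solution is a cut with no neighbour of strictly larger weight. Local search repeatedly moves to a strictly better neighbour. *)

theory Defs
  imports "HOL-Probability.Probability"
begin

text \<open>Graph: finite vertex set V :: nat set, edges E are 2-element subsets of V.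
  A cut (V1, V - V1) is represented by the block S = V1 \<subseteq> V.\<close>

definition cut_weight :: "nat set set \<Rightarrow> (nat set \<Rightarrow> real) \<Rightarrow> nat set \<Rightarrow> real" where
  "cut_weight E w S = (\<Sum>e\<in>E. if card (e \<inter> S) = 1 then w e else 0)"

definition flip_nb :: "nat set \<Rightarrow> nat set \<Rightarrow> nat set \<Rightarrow> bool" where
  "flip_nb V S S' \<longleftrightarrow> (\<exists>v\<in>V. S' = (S - {v}) \<union> ({v} - S))"

definition improving_seq :: "nat set \<Rightarrow> nat set set \<Rightarrow> (nat set \<Rightarrow> real) \<Rightarrow> nat set list \<Rightarrow> bool" where
  "improving_seq V E w xs \<longleftrightarrow> xs \<noteq> [] \<and> hd xs \<subseteq> V \<and>
     (\<forall>i. Suc i < length xs \<longrightarrow> flip_nb V (xs ! i) (xs ! Suc i) \<and>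
        cut_weight E w (xs ! i) < cut_weight E w (xs ! Suc i))"

definition max_flip_steps :: "nat set \<Rightarrow> nat set set \<Rightarrow> (nat set \<Rightarrow> real) \<Rightarrow> enat" where
  "max_flip_steps V E w = (SUP xs \<in> {xs. improving_seq V E w xs}. enat (length xs - 1))"

definition degree :: "nat set set \<Rightarrow> nat \<Rightarrow> nat" where
  "degree E v = card {e\<in>E. v \<in> e}"

definition max_degree :: "nat set \<Rightarrow> nat set set \<Rightarrow> nat" where
  "max_degree V E = (if V = {} then 0 else Max (degree E ` V))"

end

theory Submission
  imports Defs
begin

text \<open>
  A run of t improving flips raises the cut weight, which lies in [-m, m], by at most 2m, so some
  flip gains at most 2m/t. The gain of flipping v is a \<plusminus>1-combination of the weights of the
  edges at v; there are at most n 2^\<Delta> such combinations, and each lands in (0, \<epsilon>] with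
  probability at most \<phi> \<epsilon>, because conditioned on the other weights one weight must lie in an
  interval of length \<epsilon>. Along a run the sets of cut edges are pairwise distinct, so t < 2^m;
  grouping runs by the scale 2^j \<le> t < 2^(j+1) gives
  E[steps] \<le> (\<Sum>j<m. 2^(j+1) \<cdot> n 2^\<Delta> \<phi> \<cdot> 2m/2^j) = 4 n m^2 2^\<Delta> \<phi>.
\<close>

definition toggle :: "'a \<Rightarrow> 'a set \<Rightarrow> 'a set" where
  "toggle v S = (S - {v}) \<union> ({v} - S)"

lemma flip_nb_iff_toggle: "flip_nb V S S' \<longleftrightarrow> (\<exists>v\<in>V. S' = toggle v S)"
  by (simp add: flip_nb_def toggle_def)

definition cut_edges :: "'a set set \<Rightarrow> 'a set \<Rightarrow> 'a set set" where
  "cut_edges E S = {e\<in>E. card (e \<inter> S) = 1}"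

lemma cut_weight_eq_sum_cut_edges:
  "finite E \<Longrightarrow> cut_weight E w S = sum w (cut_edges E S)"
  by (simp add: cut_weight_def cut_edges_def sum.inter_filter)

lemma abs_cut_weight_le:
  assumes "finite E" "\<forall>e\<in>E. \<bar>w e\<bar> \<le> 1"
  shows "\<bar>cut_weight E w S\<bar> \<le> card E"
proof -
  have "\<bar>cut_weight E w S\<bar> \<le> (\<Sum>e\<in>E. \<bar>if card (e \<inter> S) = 1 then w e else 0\<bar>)"
    unfolding cut_weight_def by (rule sum_abs)
  also have "\<dots> \<le> (\<Sum>e\<in>E. 1)"
    using assms(2) by (intro sum_mono) auto
  finally show ?thesis by simp
qed

definition incident :: "'a set set \<Rightarrow> 'a \<Rightarrow> 'a set set" where
  "incident E v = {e\<in>E. v \<in> e}"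

lemma card_incident: "card (incident E v) = degree E v"
  by (simp add: incident_def degree_def)

text \<open>Flipping \<open>v\<close> toggles the cut status of exactly the edges incident to \<open>v\<close>; this is the
  change of the cut weight when the incident edges in \<open>T\<close> become cut and the others stop being cut.\<close>

definition flip_gain :: "'a set set \<Rightarrow> 'a \<Rightarrow> 'a set set \<Rightarrow> ('a set \<Rightarrow> real) \<Rightarrow> real" where
  "flip_gain E v T w = (\<Sum>e\<in>incident E v. (if e \<in> T then 1 else -1) * w e)"

lemma card_inter_toggle:
  assumes "card e = 2" "v \<in> e"
  shows "card (e \<inter> toggle v S) = 1 \<longleftrightarrow> card (e \<inter> S) \<noteq> 1"
proof -
  obtain u where e: "e = {v, u}" "u \<noteq> v"
    using assms by (metis card_2_iff insert_commute insertE singletonD)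
  show ?thesis
    unfolding e toggle_def using e(2)
    by (cases "v \<in> S"; cases "u \<in> S") (auto simp: Int_insert_left)
qed

lemma cut_weight_toggle:
  assumes "finite E" "\<forall>e\<in>E. card e = 2"
  shows "cut_weight E w (toggle v S) - cut_weight E w S
           = flip_gain E v (incident E v - cut_edges E S) w"
proof -
  define d where "d e = (if card (e \<inter> toggle v S) = 1 then w e else 0)
                      - (if card (e \<inter> S) = 1 then w e else 0)" for e
  have "cut_weight E w (toggle v S) - cut_weight E w S = (\<Sum>e\<in>E. d e)"
    unfolding cut_weight_def d_def by (simp add: sum_subtractf)
  also have "\<dots> = (\<Sum>e\<in>incident E v. d e)"
  proof (rule sum.mono_neutral_right)
    have "e \<inter> toggle v S = e \<inter> S" if "v \<notin> e" for e
      using that by (auto simp: toggle_def)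
    then show "\<forall>e\<in>E - incident E v. d e = 0"
      by (auto simp: d_def incident_def)
  qed (use assms(1) in \<open>auto simp: incident_def\<close>)
  also have "\<dots> = flip_gain E v (incident E v - cut_edges E S) w"
    unfolding flip_gain_def
    using assms(2) card_inter_toggle[of _ v S]
    by (intro sum.cong) (auto simp: d_def incident_def cut_edges_def)
  finally show ?thesis .
qed

lemma improving_seq_cut_weight_less:
  assumes "improving_seq V E w xs" "i < j" "j < length xs"
  shows "cut_weight E w (xs ! i) < cut_weight E w (xs ! j)"
  using assms(2,3)
proof (induction j)
  case 0
  then show ?case by simp
next
  case (Suc j)
  have "cut_weight E w (xs ! j) < cut_weight E w (xs ! Suc j)"
    using assms(1) Suc.prems(2) by (simp add: improving_seq_def)
  then show ?case
    using Suc by (cases "i = j") auto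
qed

text \<open>The cut weight only depends on the set of cut edges and strictly increases along an
  improving sequence, so no set of cut edges occurs twice.\<close>

lemma improving_seq_length_le:
  assumes "improving_seq V E w xs" "finite E"
  shows "length xs \<le> 2 ^ card E"
proof -
  have "inj_on (\<lambda>i. cut_edges E (xs ! i)) {..<length xs}"
  proof (rule inj_onI)
    fix i j assume ij: "i \<in> {..<length xs}" "j \<in> {..<length xs}"
      and "cut_edges E (xs ! i) = cut_edges E (xs ! j)"
    then have "cut_weight E w (xs ! i) = cut_weight E w (xs ! j)"
      using assms(2) by (simp add: cut_weight_eq_sum_cut_edges)
    then show "i = j"
      using ij improving_seq_cut_weight_less[OF assms(1)]
      by (metis lessThan_iff less_irrefl linorder_neqE_nat)
  qed
  then have "card {..<length xs} \<le> card (Pow E)"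
    by (rule card_inj_on_le) (use assms(2) in \<open>auto simp: cut_edges_def\<close>)
  then show ?thesis
    using assms(2) by (simp add: card_Pow)
qed

lemma exists_increment_le_average:
  fixes f :: "nat \<Rightarrow> real"
  assumes "0 < t"
  shows "\<exists>i<t. f (Suc i) - f i \<le> (f t - f 0) / t"
proof (rule ccontr)
  assume "\<not> ?thesis"
  then have "(\<Sum>i<t. (f t - f 0) / t) < (\<Sum>i<t. f (Suc i) - f i)"
    using assms by (intro sum_strict_mono) auto
  then show False
    using assms by (simp add: sum_lessThan_telescope)
qed

lemma improving_seq_small_gain:
  assumes "improving_seq V E w xs" "finite E" "\<forall>e\<in>E. card e = 2" "\<forall>e\<in>E. \<bar>w e\<bar> \<le> 1"
    and "length xs = Suc t" "0 < t"
  shows "\<exists>v\<in>V. \<exists>T\<subseteq>incident E v. 0 < flip_gain E v T w \<and> flip_gain E v T w \<le> 2 * real (card E) / real t"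
proof -
  define W where "W i = cut_weight E w (xs ! i)" for i
  obtain i where i: "i < t" "W (Suc i) - W i \<le> (W t - W 0) / t"
    using exists_increment_le_average[OF assms(6)] by blast
  have "\<bar>W t\<bar> \<le> card E" "\<bar>W 0\<bar> \<le> card E"
    unfolding W_def by (simp_all add: abs_cut_weight_le[OF assms(2,4)])
  then have "(W t - W 0) / t \<le> 2 * real (card E) / t"
    by (intro divide_right_mono) auto
  then have small: "W (Suc i) - W i \<le> 2 * real (card E) / real t"
    using i(2) by linarith
  obtain v where "v \<in> V" and v: "xs ! Suc i = toggle v (xs ! i)"
    and increase: "W i < W (Suc i)"
    using assms(1,5) i(1) by (auto simp: improving_seq_def flip_nb_iff_toggle W_def)
  define T where "T = incident E v - cut_edges E (xs ! i)"
  have "W (Suc i) - W i = flip_gain E v T w"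
    unfolding W_def v T_def by (rule cut_weight_toggle[OF assms(2,3)])
  then show ?thesis
    using \<open>v \<in> V\<close> small increase by (intro bexI[of _ v] exI[of _ T]) (auto simp: T_def)
qed

definition small_gain_weights :: "'a set \<Rightarrow> 'a set set \<Rightarrow> real \<Rightarrow> ('a set \<Rightarrow> real) set" where
  "small_gain_weights V E \<epsilon> =
     {w. \<exists>v\<in>V. \<exists>T\<subseteq>incident E v. 0 < flip_gain E v T w \<and> flip_gain E v T w \<le> \<epsilon>}"

text \<open>A sequence of \<open>t\<close> steps with \<open>2^j \<le> t < 2^(j+1)\<close> forces a step of gain at most
  \<open>2m/2^j\<close>, and by \<open>improving_seq_length_le\<close> only \<open>j < m\<close> can occur.\<close>

lemma max_flip_steps_le:
  assumes "finite E" "\<forall>e\<in>E. card e = 2" "\<forall>e\<in>E. \<bar>w e\<bar> \<le> 1"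
  shows "max_flip_steps V E w \<le> enat (\<Sum>j<card E.
           if w \<in> small_gain_weights V E (2 * real (card E) / 2 ^ j) then 2 ^ (j + 1) else 0)"
    (is "_ \<le> enat (sum ?c _)")
  unfolding max_flip_steps_def
proof (rule SUP_least)
  fix xs assume "xs \<in> {xs. improving_seq V E w xs}"
  then have imp: "improving_seq V E w xs" by simp
  define t where "t = length xs - 1"
  have len: "length xs = Suc t"
    using imp by (simp add: t_def improving_seq_def)
  show "enat (length xs - 1) \<le> enat (sum ?c {..<card E})"
  proof (cases "t = 0")
    case False
    obtain j where j: "2 ^ j \<le> t" "t < 2 ^ (j + 1)"
      using ex_power_ivl1[of 2 t] False by auto
    have "(2::nat) ^ j < 2 ^ card E"
      using improving_seq_length_le[OF imp assms(1)] len j(1) by linarith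
    then have "j < card E" by simp
    obtain v T where "v \<in> V" "T \<subseteq> incident E v" "0 < flip_gain E v T w"
      and "flip_gain E v T w \<le> 2 * real (card E) / real t"
      using improving_seq_small_gain[OF imp assms len] False by blast
    moreover have "2 * real (card E) / real t \<le> 2 * real (card E) / 2 ^ j"
      using j(1) False by (intro divide_left_mono) (auto simp flip: of_nat_le_iff)
    ultimately have "w \<in> small_gain_weights V E (2 * real (card E) / 2 ^ j)"
      unfolding small_gain_weights_def by (blast dest: order_trans)
    then have "2 ^ (j + 1) = ?c j" by simp
    also have "\<dots> \<le> sum ?c {..<card E}"
      by (rule member_le_sum) (use \<open>j < card E\<close> in auto)
    finally show ?thesis using j(2) t_def by simp
  qed (simp add: t_def)
qed

lemma measurable_linear_form:
  fixes M :: "'i \<Rightarrow> real measure"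
  assumes "\<And>i. sets (M i) = sets borel" "F \<subseteq> I"
  shows "(\<lambda>w. \<Sum>i\<in>F. c i * w i) \<in> borel_measurable (PiM I M)"
proof (intro borel_measurable_sum borel_measurable_times borel_measurable_const)
  fix i assume "i \<in> F"
  then show "(\<lambda>w. w i) \<in> borel_measurable (PiM I M)"
    using assms measurable_component_singleton[of i I M] measurable_cong_sets by blast
qed

lemma sets_linear_form_in_interval:
  fixes M :: "'i \<Rightarrow> real measure"
  assumes "\<And>i. sets (M i) = sets borel" "F \<subseteq> I"
  shows "{w\<in>space (PiM I M). 0 < (\<Sum>i\<in>F. c i * w i) \<and> (\<Sum>i\<in>F. c i * w i) \<le> \<epsilon>} \<in> sets (PiM I M)"
  using measurable_linear_form[OF assms, of c] by measurable

text \<open>Condition on all coordinates except \<open>i\<^sub>0\<close>: the remaining coordinate must then lie in a fixed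
  interval of length \<open>\<epsilon>\<close>, which has probability at most \<open>\<phi> \<epsilon>\<close>.\<close>

lemma emeasure_linear_form_in_interval_le:
  fixes M :: "'i \<Rightarrow> real measure"
  assumes prob: "\<And>i. prob_space (M i)" and sets: "\<And>i. sets (M i) = sets borel"
    and "finite I" "i\<^sub>0 \<in> F" "F \<subseteq> I" "c i\<^sub>0 \<in> {1, -1}" "0 \<le> \<epsilon>"
    and density: "\<And>a b. a \<le> b \<Longrightarrow> emeasure (M i\<^sub>0) {a..b} \<le> ennreal (\<phi> * (b - a))"
  shows "emeasure (PiM I M)
           {w\<in>space (PiM I M). 0 < (\<Sum>i\<in>F. c i * w i) \<and> (\<Sum>i\<in>F. c i * w i) \<le> \<epsilon>}
         \<le> ennreal (\<phi> * \<epsilon>)"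
    (is "emeasure _ ?B \<le> _")
proof -
  interpret prob_space "M i" for i
    by (rule prob)
  interpret product_prob_space M I
    by unfold_locales
  define J where "J = I - {i\<^sub>0}"
  have I: "I = insert i\<^sub>0 J" "i\<^sub>0 \<notin> J" "finite J"
    using assms(3-5) by (auto simp: J_def)
  have "finite F"
    using assms(3,5) finite_subset by blast
  have B: "?B \<in> sets (PiM I M)"
    by (rule sets_linear_form_in_interval[OF sets assms(5)])
  have fibre: "(\<integral>\<^sup>+ y. indicator ?B (x(i\<^sub>0 := y)) \<partial>M i\<^sub>0) \<le> ennreal (\<phi> * \<epsilon>)"
    if x: "x \<in> space (PiM J M)" for x
  proof -
    define r where "r = (\<Sum>i\<in>F - {i\<^sub>0}. c i * x i)"
    define K where "K = (if c i\<^sub>0 = 1 then {-r..\<epsilon>-r} else {r-\<epsilon>..r})"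
    have "x(i\<^sub>0 := y) \<in> space (PiM I M)" for y
      using x I sets_eq_imp_space_eq[OF sets] by (auto simp: space_PiM PiE_iff)
    moreover have "(\<Sum>i\<in>F. c i * (x(i\<^sub>0 := y)) i) = c i\<^sub>0 * y + r" for y
      unfolding r_def using \<open>finite F\<close> assms(4)
      by (subst sum.remove[of F i\<^sub>0]) (auto intro!: sum.cong)
    ultimately have "indicator ?B (x(i\<^sub>0 := y)) \<le> (indicator K y :: ennreal)" for y
      using assms(6) by (auto simp: K_def indicator_def)
    then have "(\<integral>\<^sup>+ y. indicator ?B (x(i\<^sub>0 := y)) \<partial>M i\<^sub>0) \<le> (\<integral>\<^sup>+ y. indicator K y \<partial>M i\<^sub>0)"
      by (intro nn_integral_mono) auto
    also have "\<dots> = emeasure (M i\<^sub>0) K"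
      by (simp add: K_def sets)
    also have "\<dots> \<le> ennreal (\<phi> * \<epsilon>)"
      using density[of "-r" "\<epsilon>-r"] density[of "r-\<epsilon>" r] assms(7) by (auto simp: K_def)
    finally show ?thesis .
  qed
  have "emeasure (PiM I M) ?B = (\<integral>\<^sup>+ w. indicator ?B w \<partial>PiM (insert i\<^sub>0 J) M)"
    using B I(1) by simp
  also have "\<dots> = (\<integral>\<^sup>+ x. (\<integral>\<^sup>+ y. indicator ?B (x(i\<^sub>0 := y)) \<partial>M i\<^sub>0) \<partial>PiM J M)"
    using B I by (intro product_nn_integral_insert) auto
  also have "\<dots> \<le> (\<integral>\<^sup>+ x. ennreal (\<phi> * \<epsilon>) \<partial>PiM J M)"
    using fibre by (intro nn_integral_mono) auto
  also have "\<dots> = ennreal (\<phi> * \<epsilon>)"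
    using prob_space.emeasure_space_1[OF prob_space_PiM[OF prob, of J]] by simp
  finally show ?thesis .
qed

lemma small_gain_weights_Int_space:
  "small_gain_weights V E \<epsilon> \<inter> space (PiM E M) =
     (\<Union>v\<in>V. \<Union>T\<in>Pow (incident E v). {w\<in>space (PiM E M).
        0 < (\<Sum>e\<in>incident E v. (if e \<in> T then 1 else -1) * w e) \<and>
        (\<Sum>e\<in>incident E v. (if e \<in> T then 1 else -1) * w e) \<le> \<epsilon>})"
  by (auto simp: small_gain_weights_def flip_gain_def)

lemma sets_small_gain_weights:
  fixes M :: "'a set \<Rightarrow> real measure"
  assumes "\<And>e. sets (M e) = sets borel" "finite V" "finite E"
  shows "small_gain_weights V E \<epsilon> \<inter> space (PiM E M) \<in> sets (PiM E M)"
proof -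
  have "finite (incident E v)" "incident E v \<subseteq> E" for v
    using assms(3) by (auto simp: incident_def)
  then show ?thesis
    unfolding small_gain_weights_Int_space using assms(1,2)
    by (intro sets.finite_UN sets_linear_form_in_interval) auto
qed

lemma emeasure_small_gain_weights_le:
  fixes M :: "'a set \<Rightarrow> real measure"
  assumes prob: "\<And>e. prob_space (M e)" and sets: "\<And>e. sets (M e) = sets borel"
    and "finite V" "finite E" "0 \<le> \<phi>" "0 \<le> \<epsilon>"
    and density: "\<And>e a b. e \<in> E \<Longrightarrow> a \<le> b \<Longrightarrow> emeasure (M e) {a..b} \<le> ennreal (\<phi> * (b - a))"
  shows "emeasure (PiM E M) (small_gain_weights V E \<epsilon> \<inter> space (PiM E M))
           \<le> ennreal (\<phi> * \<epsilon> * (\<Sum>v\<in>V. 2 ^ card (incident E v)))"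
proof -
  define B where "B v T = {w\<in>space (PiM E M).
    0 < (\<Sum>e\<in>incident E v. (if e \<in> T then 1 else -1) * w e) \<and>
    (\<Sum>e\<in>incident E v. (if e \<in> T then 1 else -1) * w e) \<le> \<epsilon>}" for v T
  have incident: "finite (incident E v)" "incident E v \<subseteq> E" for v
    using assms(4) by (auto simp: incident_def)
  have B_sets: "B v T \<in> sets (PiM E M)" for v T
    unfolding B_def using sets incident(2) by (rule sets_linear_form_in_interval)
  have B_le: "emeasure (PiM E M) (B v T) \<le> ennreal (\<phi> * \<epsilon>)" for v T
  proof (cases "incident E v = {}")
    case True
    then show ?thesis by (simp add: B_def)
  next
    case False
    then obtain e where "e \<in> incident E v" by blast
    then show ?thesis
      unfolding B_def using incident(2) assms(4,6)
      by (intro emeasure_linear_form_in_interval_le[OF prob sets, of _ e] density) auto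
  qed
  have "emeasure (PiM E M) (small_gain_weights V E \<epsilon> \<inter> space (PiM E M))
          \<le> (\<Sum>v\<in>V. emeasure (PiM E M) (\<Union>T\<in>Pow (incident E v). B v T))"
    unfolding small_gain_weights_Int_space B_def[symmetric] using assms(3) B_sets incident(1)
    by (intro emeasure_subadditive_finite) auto
  also have "\<dots> \<le> (\<Sum>v\<in>V. \<Sum>T\<in>Pow (incident E v). emeasure (PiM E M) (B v T))"
    using B_sets incident(1) by (intro sum_mono emeasure_subadditive_finite) auto
  also have "\<dots> \<le> (\<Sum>v\<in>V. \<Sum>T\<in>Pow (incident E v). ennreal (\<phi> * \<epsilon>))"
    using B_le by (intro sum_mono) auto
  also have "\<dots> = ennreal (\<Sum>v\<in>V. \<phi> * \<epsilon> * 2 ^ card (incident E v))"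
    using incident(1) assms(5,6)
    by (simp add: card_Pow ennreal_of_nat_eq_real_of_nat sum_ennreal mult.commute
        flip: ennreal_mult)
  finally show ?thesis
    by (simp add: sum_distrib_left)
qed

lemma sum_dyadic_scales_ennreal:
  assumes "0 \<le> c"
  shows "(\<Sum>j<m. ennreal (2 ^ (j + 1)) * ennreal (c / 2 ^ j)) = ennreal (2 * real m * c)"
proof -
  have "ennreal (2 ^ (j + 1)) * ennreal (c / 2 ^ j) = ennreal (2 * c)" for j :: nat
    using assms by (simp add: ennreal_mult[symmetric])
  then show ?thesis
    using assms by (simp add: ennreal_of_nat_eq_real_of_nat mult_ac flip: ennreal_mult)
qed

lemma nn_integral_max_flip_steps_le:
  fixes M :: "nat set \<Rightarrow> real measure"
  assumes prob: "\<And>e. prob_space (M e)" and sets: "\<And>e. sets (M e) = sets borel"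
    and "finite V" "finite E" "\<forall>e\<in>E. card e = 2" "0 \<le> \<phi>"
    and density: "\<And>e a b. e \<in> E \<Longrightarrow> a \<le> b \<Longrightarrow> emeasure (M e) {a..b} \<le> ennreal (\<phi> * (b - a))"
    and bounded: "AE w in PiM E M. \<forall>e\<in>E. \<bar>w e\<bar> \<le> 1"
  shows "(\<integral>\<^sup>+ w. ennreal_of_enat (max_flip_steps V E w) \<partial>PiM E M)
           \<le> ennreal (4 * real (card E) ^ 2 * \<phi> * (\<Sum>v\<in>V. 2 ^ degree E v))"
proof -
  define m where "m = card E"
  define S where "S = (\<Sum>v\<in>V. 2 ^ degree E v :: real)"
  define A where "A j = small_gain_weights V E (2 * real m / 2 ^ j) \<inter> space (PiM E M)" for j
  have "0 \<le> S"
    unfolding S_def by (rule sum_nonneg) simp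
  have A_sets: "A j \<in> sets (PiM E M)" for j
    unfolding A_def by (rule sets_small_gain_weights[OF sets assms(3,4)])
  have "AE w in PiM E M. ennreal_of_enat (max_flip_steps V E w)
          \<le> (\<Sum>j<m. ennreal (2 ^ (j + 1)) * indicator (A j) w)"
    using bounded
  proof (rule AE_mp, intro AE_I2 impI)
    fix w assume w: "w \<in> space (PiM E M)" "\<forall>e\<in>E. \<bar>w e\<bar> \<le> 1"
    have "max_flip_steps V E w \<le> enat (\<Sum>j<m.
            if w \<in> small_gain_weights V E (2 * real m / 2 ^ j) then 2 ^ (j + 1) else 0)"
      (is "_ \<le> enat ?N")
      unfolding m_def by (rule max_flip_steps_le[OF assms(4,5) w(2)])
    then have "ennreal_of_enat (max_flip_steps V E w) \<le> of_nat ?N"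
      using ennreal_of_enat_le_iff[of _ "enat ?N"] by simp
    also have "\<dots> = (\<Sum>j<m. ennreal (2 ^ (j + 1)) * indicator (A j) w)"
      unfolding of_nat_sum using w(1)
      by (intro sum.cong) (auto simp: A_def indicator_def ennreal_of_nat_eq_real_of_nat)
    finally show "ennreal_of_enat (max_flip_steps V E w)
                    \<le> (\<Sum>j<m. ennreal (2 ^ (j + 1)) * indicator (A j) w)" .
  qed
  then have "(\<integral>\<^sup>+ w. ennreal_of_enat (max_flip_steps V E w) \<partial>PiM E M)
               \<le> (\<integral>\<^sup>+ w. (\<Sum>j<m. ennreal (2 ^ (j + 1)) * indicator (A j) w) \<partial>PiM E M)"
    by (rule nn_integral_mono_AE)
  also have "\<dots> = (\<Sum>j<m. \<integral>\<^sup>+ w. ennreal (2 ^ (j + 1)) * indicator (A j) w \<partial>PiM E M)"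
    using A_sets by (intro nn_integral_sum borel_measurable_times_ennreal borel_measurable_indicator) auto
  also have "\<dots> = (\<Sum>j<m. ennreal (2 ^ (j + 1)) * emeasure (PiM E M) (A j))"
    by (intro sum.cong refl nn_integral_cmult_indicator A_sets)
  also have "\<dots> \<le> (\<Sum>j<m. ennreal (2 ^ (j + 1)) * ennreal (2 * real m * \<phi> * S / 2 ^ j))"
  proof (intro sum_mono mult_left_mono)
    fix j
    have "emeasure (PiM E M) (A j) \<le> ennreal (\<phi> * (2 * real m / 2 ^ j) * S)"
      unfolding A_def S_def card_incident[symmetric]
      by (rule emeasure_small_gain_weights_le[OF prob sets assms(3,4,6) _ density]) auto
    then show "emeasure (PiM E M) (A j) \<le> ennreal (2 * real m * \<phi> * S / 2 ^ j)"
      by (simp add: field_simps)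
  qed simp
  also have "\<dots> = ennreal (2 * real m * (2 * real m * \<phi> * S))"
    by (rule sum_dyadic_scales_ennreal) (use \<open>0 \<le> S\<close> assms(6) in simp)
  also have "\<dots> = ennreal (4 * real m ^ 2 * \<phi> * S)"
    by (simp add: power2_eq_square mult_ac)
  finally show ?thesis
    unfolding m_def S_def .
qed

definition smoothed_density :: "real \<Rightarrow> (real \<Rightarrow> real) \<Rightarrow> bool" where
  "smoothed_density \<phi> g \<longleftrightarrow> g \<in> borel_measurable borel \<and> (\<forall>x. 0 \<le> g x \<and> g x \<le> \<phi>) \<and>
     (\<forall>x. x \<notin> {-1..1} \<longrightarrow> g x = 0) \<and> (\<integral>\<^sup>+ x. ennreal (g x) \<partial>lborel) = 1"

lemma smoothed_density_nonneg: "smoothed_density \<phi> g \<Longrightarrow> 0 \<le> \<phi>"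
  unfolding smoothed_density_def by (meson order_trans)

lemma prob_space_smoothed_density:
  "smoothed_density \<phi> g \<Longrightarrow> prob_space (density lborel (\<lambda>x. ennreal (g x)))"
  unfolding smoothed_density_def
  by (auto intro!: prob_spaceI simp: emeasure_density measurable_lborel1)

lemma emeasure_smoothed_density_interval_le:
  assumes "smoothed_density \<phi> g" "a \<le> b"
  shows "emeasure (density lborel (\<lambda>x. ennreal (g x))) {a..b} \<le> ennreal (\<phi> * (b - a))"
proof -
  have "emeasure (density lborel (\<lambda>x. ennreal (g x))) {a..b}
          = (\<integral>\<^sup>+ x. ennreal (g x) * indicator {a..b} x \<partial>lborel)"
    using assms(1) by (intro emeasure_density) (auto simp: smoothed_density_def measurable_lborel1)
  also have "\<dots> \<le> (\<integral>\<^sup>+ x. ennreal \<phi> * indicator {a..b} x \<partial>lborel)"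
    using assms(1) by (intro nn_integral_mono) (auto simp: smoothed_density_def indicator_def ennreal_leI)
  also have "\<dots> = ennreal \<phi> * emeasure lborel {a..b}"
    by (rule nn_integral_cmult_indicator) simp
  also have "\<dots> = ennreal (\<phi> * (b - a))"
    using assms smoothed_density_nonneg by (simp add: ennreal_mult)
  finally show ?thesis .
qed

lemma AE_smoothed_density_abs_le_1:
  assumes "smoothed_density \<phi> g"
  shows "AE x in density lborel (\<lambda>x. ennreal (g x)). \<bar>x\<bar> \<le> 1"
proof -
  have "g x = 0" if "1 < \<bar>x\<bar>" for x
  proof -
    have "x \<notin> {-1..1}"
      using that by auto
    then show ?thesis
      using assms unfolding smoothed_density_def by blast
  qed
  then have "AE x in lborel. 0 < ennreal (g x) \<longrightarrow> \<bar>x\<bar> \<le> 1"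
    by (intro AE_I2 impI) (metis ennreal_0 less_irrefl not_le)
  moreover have "(\<lambda>x. ennreal (g x)) \<in> borel_measurable lborel"
    using assms by (simp add: smoothed_density_def measurable_lborel1)
  ultimately show ?thesis
    by (simp only: AE_density)
qed

text \<open>The product-measure lemmas need every coordinate to be a probability space, so the
  coordinates outside \<open>E\<close>, which do not affect \<open>PiM E\<close>, are replaced by a point mass.\<close>

lemma nn_integral_max_flip_steps_smoothed_le:
  assumes "finite V" "E \<subseteq> {e. e \<subseteq> V \<and> card e = 2}" "0 \<le> \<phi>"
    and smoothed: "\<forall>e\<in>E. smoothed_density \<phi> (f e)"
  shows "(\<integral>\<^sup>+ w. ennreal_of_enat (max_flip_steps V E w)
            \<partial>PiM E (\<lambda>e. density lborel (\<lambda>x. ennreal (f e x))))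
           \<le> ennreal (4 * real (card E) ^ 2 * \<phi> * (\<Sum>v\<in>V. 2 ^ degree E v))"
proof -
  define M where "M e = (if e \<in> E then density lborel (\<lambda>x. ennreal (f e x)) else return borel 0)"
    for e
  have "finite E" "\<forall>e\<in>E. card e = 2"
    using assms(1,2) by (auto intro: finite_subset[of _ "Pow V"])
  have PiM_eq: "PiM E (\<lambda>e. density lborel (\<lambda>x. ennreal (f e x))) = PiM E M"
    by (rule PiM_cong) (simp_all add: M_def)
  have M: "M e = density lborel (\<lambda>x. ennreal (f e x))" if "e \<in> E" for e
    using that by (simp add: M_def)
  have prob: "prob_space (M e)" for e
    using smoothed M by (cases "e \<in> E") (auto simp: M_def prob_space_smoothed_density prob_space_return)
  have sets: "sets (M e) = sets borel" for e
    by (simp add: M_def)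
  have density: "emeasure (M e) {a..b} \<le> ennreal (\<phi> * (b - a))" if "e \<in> E" "a \<le> b" for e a b
    using smoothed that by (simp add: M emeasure_smoothed_density_interval_le)
  have "AE x in M e. \<bar>x\<bar> \<le> 1" if "e \<in> E" for e
    unfolding M[OF that] using smoothed that by (blast intro: AE_smoothed_density_abs_le_1)
  then have bounded: "AE w in PiM E M. \<forall>e\<in>E. \<bar>w e\<bar> \<le> 1"
    using \<open>finite E\<close> prob by (intro AE_finite_allI AE_PiM_component) auto
  show ?thesis
    unfolding PiM_eq
    by (rule nn_integral_max_flip_steps_le[OF prob sets assms(1) \<open>finite E\<close>
          \<open>\<forall>e\<in>E. card e = 2\<close> assms(3) density bounded])
qed

lemma max_flip_steps_no_edges: "max_flip_steps V {} w = 0"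
  using max_flip_steps_le[of "{}" w V] by (simp add: enat_0)

lemma sum_pow_degree_le: "finite V \<Longrightarrow> (\<Sum>v\<in>V. 2 ^ degree E v) \<le> real (card V) * 2 ^ max_degree V E"
  by (intro sum_bounded_above power_increasing) (auto simp: max_degree_def)

theorem mainTheorem11:
  "\<exists>C>0. \<forall>(V::nat set) (E::nat set set) (f::nat set \<Rightarrow> real \<Rightarrow> real) (\<phi>::real).
     finite V \<longrightarrow> E \<subseteq> {e. e \<subseteq> V \<and> card e = 2} \<longrightarrow>
     (\<forall>e\<in>E. f e \<in> borel_measurable borel \<and> (\<forall>x. 0 \<le> f e x \<and> f e x \<le> \<phi>) \<and>
        (\<forall>x. x \<notin> {-1..1} \<longrightarrow> f e x = 0) \<and>
        (\<integral>\<^sup>+ x. ennreal (f e x) \<partial>lborel) = 1) \<longrightarrow>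
     (\<integral>\<^sup>+ w. ennreal_of_enat (max_flip_steps V E w) \<partial>(PiM E (\<lambda>e. density lborel (\<lambda>x. ennreal (f e x)))))
       \<le> ennreal (C * 2 ^ max_degree V E * real (card V) * real (card E) ^ 2 * \<phi>)"
proof (intro exI[of _ "4::real"] conjI allI impI)
  fix V :: "nat set" and E :: "nat set set" and f :: "nat set \<Rightarrow> real \<Rightarrow> real" and \<phi> :: real
  assume V: "finite V" and E: "E \<subseteq> {e. e \<subseteq> V \<and> card e = 2}"
    and "\<forall>e\<in>E. f e \<in> borel_measurable borel \<and> (\<forall>x. 0 \<le> f e x \<and> f e x \<le> \<phi>) \<and>
           (\<forall>x. x \<notin> {-1..1} \<longrightarrow> f e x = 0) \<and> (\<integral>\<^sup>+ x. ennreal (f e x) \<partial>lborel) = 1"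
  then have smoothed: "\<forall>e\<in>E. smoothed_density \<phi> (f e)"
    by (simp add: smoothed_density_def)
  let ?P = "PiM E (\<lambda>e. density lborel (\<lambda>x. ennreal (f e x)))"
  show "(\<integral>\<^sup>+ w. ennreal_of_enat (max_flip_steps V E w) \<partial>?P)
          \<le> ennreal (4 * 2 ^ max_degree V E * real (card V) * real (card E) ^ 2 * \<phi>)"
  proof (cases "E = {}")
    case True
    then show ?thesis by (simp add: max_flip_steps_no_edges)
  next
    case False
    then have "0 \<le> \<phi>"
      using smoothed smoothed_density_nonneg by blast
    have "(\<integral>\<^sup>+ w. ennreal_of_enat (max_flip_steps V E w) \<partial>?P)
            \<le> ennreal (4 * real (card E) ^ 2 * \<phi> * (\<Sum>v\<in>V. 2 ^ degree E v))"
      by (rule nn_integral_max_flip_steps_smoothed_le[OF V E \<open>0 \<le> \<phi>\<close> smoothed])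
    also have "\<dots> \<le> ennreal (4 * real (card E) ^ 2 * \<phi> * (real (card V) * 2 ^ max_degree V E))"
      using sum_pow_degree_le[OF V] \<open>0 \<le> \<phi>\<close> by (intro ennreal_leI mult_left_mono) auto
    finally show ?thesis
      by (simp add: mult_ac)
  qed
qed simp

end
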